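(* Let $\psi:K\to V$ satisfy, for all $k<k'$ in $K$, $\psi(k)\le\psi(k')$ and $\frac{k}{k'}\psi(k')\le\psi(k)$. Then the mechanism $(f,p)$ defined by $(f(v,k),p(v,k))=(0,0,0)$ if $v\le\psi(k)$ and $(f(v,k),p(v,k))=(k,1,\psi(k))$ otherwise (a ratio-dependent posted price mechanism) is incentive compatible and individually rational.
   Context: An agent has private type $(v,k)\in V\times K$, $V=[0,1]$, $K=(0,1]$, and from an outcome $(a_1,a_2,t)$ with $a_1,a_2\in[0,1]$ (quantities of two divisible goods) and $t\in\mathbb{R}$ (payment by the agent) gets utility $U_{(v,k)}(a_1,a_2,t)=v\min\{a_1/k,a_2\}-t$. A mechanism is a pair $(f,p)$ with $f=(f_1,f_2):V\times K\to[0,1]^2$, $p:V\times K\to\mathbb{R}$. It is incentive compatible if $U_{(v,k)}(f(v,k),p(v,k))\ge U_{(v,k)}(f(v',k'),p(v',k'))$ for all types $(v,k),(v',k')$, and individually rational if $U_{(v,k)}(f(v,k),p(v,k))\ge0$ for all $(v,k)$. *)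

theory Defs
  imports Complex_Main
begin

definition V :: "real set" where "V = {0..1}"
definition K :: "real set" where "K = {0<..1}"

definition U :: "real \<Rightarrow> real \<Rightarrow> real \<Rightarrow> real \<Rightarrow> real \<Rightarrow> real" where
  "U v k a1 a2 t = v * min (a1 / k) a2 - t"

definition mechanism :: "(real \<Rightarrow> real \<Rightarrow> real \<times> real) \<Rightarrow> (real \<Rightarrow> real \<Rightarrow> real) \<Rightarrow> bool" where
  "mechanism f p \<longleftrightarrow> (\<forall>v\<in>V. \<forall>k\<in>K. fst (f v k) \<in> {0..1} \<and> snd (f v k) \<in> {0..1})"

definition incentive_compatible :: "(real \<Rightarrow> real \<Rightarrow> real \<times> real) \<Rightarrow> (real \<Rightarrow> real \<Rightarrow> real) \<Rightarrow> bool" where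
  "incentive_compatible f p \<longleftrightarrow>
     (\<forall>v\<in>V. \<forall>k\<in>K. \<forall>v'\<in>V. \<forall>k'\<in>K.
        U v k (fst (f v k)) (snd (f v k)) (p v k) \<ge> U v k (fst (f v' k')) (snd (f v' k')) (p v' k'))"

definition individually_rational :: "(real \<Rightarrow> real \<Rightarrow> real \<times> real) \<Rightarrow> (real \<Rightarrow> real \<Rightarrow> real) \<Rightarrow> bool" where
  "individually_rational f p \<longleftrightarrow> (\<forall>v\<in>V. \<forall>k\<in>K. U v k (fst (f v k)) (snd (f v k)) (p v k) \<ge> 0)"

definition rdpp_alloc :: "(real \<Rightarrow> real) \<Rightarrow> real \<Rightarrow> real \<Rightarrow> real \<times> real" where
  "rdpp_alloc \<psi> v k = (if v \<le> \<psi> k then (0, 0) else (k, 1))"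

definition rdpp_pay :: "(real \<Rightarrow> real) \<Rightarrow> real \<Rightarrow> real \<Rightarrow> real" where
  "rdpp_pay \<psi> v k = (if v \<le> \<psi> k then 0 else \<psi> k)"

end

theory Submission
  imports Defs
begin

text \<open>A report \<open>(v', k')\<close> buys either nothing or the bundle \<open>(k', 1)\<close> at price \<open>\<psi> k'\<close>.
  For an agent of true ratio \<open>k\<close>: if \<open>k \<le> k'\<close> the agent obtains no more than under truth-telling but pays at least \<open>\<psi> k\<close>;
  if \<open>k' < k\<close> it obtains the fraction \<open>k'/k\<close> of its truthful bundle at a price of at least
  \<open>(k'/k) \<psi> k\<close>, i.e. at best a scaled-down copy of the truthful deal. Individual rationality holds
  because a posted price is paid only by agents whose value exceeds it.\<close>

lemma rdpp_utility:
  "U v k (fst (rdpp_alloc \<psi> v' k')) (snd (rdpp_alloc \<psi> v' k')) (rdpp_pay \<psi> v' k')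
    = (if v' \<le> \<psi> k' then 0 else v * min (k' / k) 1 - \<psi> k')"
  by (simp add: U_def rdpp_alloc_def rdpp_pay_def)

lemma rdpp_utility_truthful:
  assumes "0 < k"
  shows "U v k (fst (rdpp_alloc \<psi> v k)) (snd (rdpp_alloc \<psi> v k)) (rdpp_pay \<psi> v k)
    = max 0 (v - \<psi> k)"
  using assms by (simp add: rdpp_utility)

lemma scaled_le_max_zero:
  fixes r x :: real
  assumes "0 \<le> r" "r \<le> 1"
  shows "r * x \<le> max 0 x"
proof (cases "0 \<le> x")
  case True
  then show ?thesis using assms by (simp add: mult_left_le_one_le)
next
  case False
  then show ?thesis using assms by (simp add: mult_nonneg_nonpos)
qed

lemma posted_price_misreport_le:
  fixes \<psi> :: "real \<Rightarrow> real"
  assumes "0 < k" "0 < k'"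
    and mono: "k \<le> k' \<Longrightarrow> \<psi> k \<le> \<psi> k'"
    and ratio: "k' < k \<Longrightarrow> (k' / k) * \<psi> k \<le> \<psi> k'"
  shows "v * min (k' / k) 1 - \<psi> k' \<le> max 0 (v - \<psi> k)"
proof (cases "k \<le> k'")
  case True
  then have "min (k' / k) 1 = 1" using \<open>0 < k\<close> by simp
  then show ?thesis using mono True by simp
next
  case False
  then have "min (k' / k) 1 = k' / k" using \<open>0 < k\<close> by simp
  moreover have "v * (k' / k) - \<psi> k' \<le> (k' / k) * (v - \<psi> k)"
    using ratio False by (simp add: algebra_simps)
  moreover have "(k' / k) * (v - \<psi> k) \<le> max 0 (v - \<psi> k)"
    using False assms(1,2) by (intro scaled_le_max_zero) auto
  ultimately show ?thesis by simp
qed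

theorem proposition1:
  fixes \<psi> :: "real \<Rightarrow> real"
  assumes psi_range: "\<forall>k\<in>K. \<psi> k \<in> V"
    and psi_mono: "\<forall>k\<in>K. \<forall>k'\<in>K. k < k' \<longrightarrow> \<psi> k \<le> \<psi> k'"
    and psi_ratio: "\<forall>k\<in>K. \<forall>k'\<in>K. k < k' \<longrightarrow> (k / k') * \<psi> k' \<le> \<psi> k"
  shows "mechanism (rdpp_alloc \<psi>) (rdpp_pay \<psi>)
       \<and> incentive_compatible (rdpp_alloc \<psi>) (rdpp_pay \<psi>)
       \<and> individually_rational (rdpp_alloc \<psi>) (rdpp_pay \<psi>)"
proof (intro conjI)
  show "mechanism (rdpp_alloc \<psi>) (rdpp_pay \<psi>)"
    by (auto simp: mechanism_def rdpp_alloc_def K_def)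
  show "individually_rational (rdpp_alloc \<psi>) (rdpp_pay \<psi>)"
    by (simp add: individually_rational_def K_def rdpp_utility_truthful)
  have misreport: "v * min (k' / k) 1 - \<psi> k' \<le> max 0 (v - \<psi> k)"
    if "k \<in> K" "k' \<in> K" for v k k'
  proof (rule posted_price_misreport_le)
    show "\<psi> k \<le> \<psi> k'" if "k \<le> k'"
      using psi_mono \<open>k \<in> K\<close> \<open>k' \<in> K\<close> \<open>k \<le> k'\<close> by (cases "k = k'") auto
  qed (use psi_ratio that in \<open>auto simp: K_def\<close>)
  show "incentive_compatible (rdpp_alloc \<psi>) (rdpp_pay \<psi>)"
    unfolding incentive_compatible_def
  proof (intro ballI)
    fix v k v' k' assume "v \<in> V" "k \<in> K" "v' \<in> V" "k' \<in> K"
    then show "U v k (fst (rdpp_alloc \<psi> v' k')) (snd (rdpp_alloc \<psi> v' k')) (rdpp_pay \<psi> v' k')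
        \<le> U v k (fst (rdpp_alloc \<psi> v k)) (snd (rdpp_alloc \<psi> v k)) (rdpp_pay \<psi> v k)"
      using misreport[of k k' v] by (auto simp: K_def rdpp_utility rdpp_utility_truthful)
  qed
qed

end
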